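(* Let $a,b,c,d\in\mathbb C$ with $a\notin\mathbb Z$ and $d\notin\{0,-1,-2,\dots\}$. Then, as an identity of formal power series in $x,y$, $$\mathrm H_2(a,b,c;d;x,y)=F(a,b;d;x)\,{}_1F_1(c;1-a;-y)+\sum_{k=1}^\infty\sum_{l=1}^k\frac{(-1)^{k+l}(k-1)!}{(l-1)!\,l!\,(k-l)!}\,\frac{(b)_k(c)_l}{(1-a)_l(d)_k}\,x^ky^l\,F(a+k,b+k;d+k;x)\,{}_1F_1(c+l;1-a+l;-y).$$
   Context: Pochhammer symbol: $(\lambda)_k=\Gamma(\lambda+k)/\Gamma(\lambda)$ for every integer $k$ (possibly negative) whenever defined; $(\lambda)_0=1$. $F(a,b;c;x)=\sum_{k\ge0}\frac{(a)_k(b)_k}{(c)_k k!}x^k$, ${}_1F_1(a;c;x)=\sum_{k\ge0}\frac{(a)_k}{(c)_k k!}x^k$. Confluent Horn function $\mathrm H_2(a,b,c;d;x,y)=\sum_{p,q\ge0}\frac{(a)_{p-q}(b)_p(c)_q}{(d)_p\,p!\,q!}x^py^q$. All functions are regarded as formal power series in $x,y$; the infinite double sum converges in the formal (degree) topology. *)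

theory Defs
  imports Complex_Main "HOL-Computational_Algebra.Formal_Power_Series" "HOL-Library.Nonpos_Ints"
begin

text \<open>Pochhammer symbol with integer index: for k >= 0 the usual rising factorial,
  for k = -m < 0 it is Gamma(lam - m)/Gamma(lam) = 1 / ((lam-m)(lam-m+1)...(lam-1)).\<close>
definition poch_int :: "complex \<Rightarrow> int \<Rightarrow> complex" where
  "poch_int lam k = (if 0 \<le> k then pochhammer lam (nat k)
                     else inverse (pochhammer (lam + of_int k) (nat (- k))))"

definition hyp2F1 :: "complex \<Rightarrow> complex \<Rightarrow> complex \<Rightarrow> complex fps" where
  "hyp2F1 a b c = Abs_fps (\<lambda>k. pochhammer a k * pochhammer b k / (pochhammer c k * fact k))"

definition hyp1F1 :: "complex \<Rightarrow> complex \<Rightarrow> complex fps" where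
  "hyp1F1 a c = Abs_fps (\<lambda>k. pochhammer a k / (pochhammer c k * fact k))"

text \<open>Formal power series in two variables x, y are modelled as (complex fps) fps:
  the outer variable is x, the inner (coefficient) variable is y.\<close>

definition fps_in_x :: "complex fps \<Rightarrow> complex fps fps" where
  "fps_in_x f = Abs_fps (\<lambda>p. fps_const (fps_nth f p))"

definition fps_in_y :: "complex fps \<Rightarrow> complex fps fps" where
  "fps_in_y g = fps_const g"

abbreviation X2 :: "complex fps fps" where "X2 \<equiv> fps_X"
abbreviation Y2 :: "complex fps fps" where "Y2 \<equiv> fps_const fps_X"

abbreviation const2 :: "complex \<Rightarrow> complex fps fps" where
  "const2 r \<equiv> fps_const (fps_const r)"

definition H2 :: "complex \<Rightarrow> complex \<Rightarrow> complex \<Rightarrow> complex \<Rightarrow> complex fps fps" where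
  "H2 a b c d = Abs_fps (\<lambda>p. Abs_fps (\<lambda>q.
      poch_int a (int p - int q) * pochhammer b p * pochhammer c q
        / (pochhammer d p * fact p * fact q)))"

end

theory Submission
  imports Defs
begin

text \<open>Compare coefficients of x^p y^q. The reflection (a)_{p-q} (1-a)_q = (-1)^q (a-q)_p turns the
  coefficient of H2 - F * 1F1 into a multiple of ((a-q)_p - (a)_p)/p!. On the other side, the
  inner sum over l collapses by Vandermonde's convolution to (q)_k/(k! q!), and the remaining sum
  over k >= 1 is the Chu-Vandermonde expansion of (a-q)_p/p! without its k = 0 term (a)_p/p!.
  Only the terms with k <= p reach x^p, which gives convergence in the formal topology.\<close>

lemma sum_choose_pred_mult_choose:
  assumes "K \<ge> 1"
  shows "(\<Sum>l=1..K. ((K - 1) choose (l - 1)) * (q choose l)) = (K - 1 + q) choose K"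
proof -
  have "(K - 1 + q) choose K = (\<Sum>i\<le>K. ((K - 1) choose i) * (q choose (K - i)))"
    by (rule vandermonde[symmetric])
  also have "\<dots> = (\<Sum>i<K. ((K - 1) choose i) * (q choose (K - i)))"
    using assms by (simp add: lessThan_Suc_atMost[symmetric])
  also have "\<dots> = (\<Sum>l=1..K. ((K - 1) choose (l - 1)) * (q choose l))"
  proof (rule sum.reindex_bij_witness[symmetric, where i = "\<lambda>l. K - l" and j = "\<lambda>i. K - i"])
    fix l assume l: "l \<in> {1..K}"
    then have "(K - 1) choose (K - l) = (K - 1) choose (l - 1)"
      using binomial_symmetric[of "K - l" "K - 1"] by auto
    with l show "((K - 1) choose (K - l)) * (q choose (K - (K - l))) = ((K - 1) choose (l - 1)) * (q choose l)"
      by simp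
  qed auto
  finally show ?thesis ..
qed

lemma pochhammer_of_nat_div_fact:
  "pochhammer (of_nat q :: 'a::field_char_0) (Suc k) / fact (Suc k) = of_nat ((k + q) choose Suc k)"
proof -
  have "(of_nat ((k + q) choose Suc k) :: 'a) = pochhammer (of_nat (k + q) - of_nat (Suc k) + 1) (Suc k) / fact (Suc k)"
    by (simp add: binomial_gbinomial gbinomial_pochhammer')
  then show ?thesis by simp
qed

lemma sum_fact_quotients_eq_pochhammer:
  "(\<Sum>l=1..Suc k. if l \<le> q then fact k / (fact (l - 1) * fact l * fact (Suc k - l) * fact (q - l)) else 0)
     = pochhammer (of_nat q :: 'a::field_char_0) (Suc k) / (fact (Suc k) * fact q)"
proof -
  have "(\<Sum>l=1..Suc k. if l \<le> q then fact k / (fact (l - 1) * fact l * fact (Suc k - l) * fact (q - l)) else 0)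
      = (\<Sum>l=1..Suc k. of_nat ((k choose (l - 1)) * (q choose l)) / (fact q :: 'a))"
  proof (rule sum.cong[OF refl])
    fix l assume l: "l \<in> {1..Suc k}"
    show "(if l \<le> q then fact k / (fact (l - 1) * fact l * fact (Suc k - l) * fact (q - l)) else 0)
        = of_nat ((k choose (l - 1)) * (q choose l)) / (fact q :: 'a)"
    proof (cases "l \<le> q")
      case True
      have "(of_nat (k choose (l - 1)) :: 'a) = fact k / (fact (l - 1) * fact (k - (l - 1)))"
        using l by (intro binomial_fact) auto
      moreover have "k - (l - 1) = Suc k - l"
        using l by auto
      moreover have "(of_nat (q choose l) :: 'a) = fact q / (fact l * fact (q - l))"
        using True by (rule binomial_fact)
      ultimately show ?thesis
        using True by (simp add: field_simps)
    qed simp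
  qed
  also have "\<dots> = of_nat (\<Sum>l=1..Suc k. (k choose (l - 1)) * (q choose l)) / fact q"
    unfolding of_nat_sum sum_divide_distrib ..
  also have "\<dots> = of_nat ((k + q) choose Suc k) / fact q"
    using sum_choose_pred_mult_choose[of "Suc k" q] by simp
  finally show ?thesis
    by (simp add: pochhammer_of_nat_div_fact[symmetric])
qed

lemma pochhammer_minus_of_nat:
  assumes "k \<le> p"
  shows "pochhammer (- of_nat p :: 'a::field_char_0) k = (-1) ^ k * fact p / fact (p - k)"
proof -
  have "fact p = (fact (p - k) :: 'a) * pochhammer (1 + of_nat (p - k)) k"
    using pochhammer_product[of "p - k" p "1::'a"] assms by (simp add: pochhammer_fact)
  moreover have "(of_nat p - of_nat k + 1 :: 'a) = 1 + of_nat (p - k)"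
    using assms by simp
  ultimately show ?thesis
    using pochhammer_minus[of "of_nat p :: 'a" k] by (simp add: add.commute)
qed

lemma pochhammer_diff_of_nat_expansion:
  fixes a :: "'a::field_char_0"
  assumes "pochhammer a p \<noteq> 0"
  shows "(\<Sum>k\<le>p. (-1) ^ k * pochhammer (of_nat q) k * pochhammer (a + of_nat k) (p - k) / (fact k * fact (p - k)))
       = pochhammer (a - of_nat q) p / fact p"
proof -
  have "(\<Sum>k\<le>p. (-1) ^ k * pochhammer (of_nat q) k * pochhammer (a + of_nat k) (p - k) / (fact k * fact (p - k)))
     = (\<Sum>k\<le>p. pochhammer (of_nat q) k * pochhammer (- of_nat p) k / (of_nat (fact k) * pochhammer a k))
       * pochhammer a p / fact p"
    unfolding sum_distrib_right sum_divide_distrib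
  proof (rule sum.cong[OF refl])
    fix k assume "k \<in> {..p}"
    then have split: "pochhammer a p = pochhammer a k * pochhammer (a + of_nat k) (p - k)" and "k \<le> p"
      by (auto intro: pochhammer_product)
    with assms have "pochhammer a k \<noteq> 0" by auto
    with split \<open>k \<le> p\<close> show "(-1) ^ k * pochhammer (of_nat q) k * pochhammer (a + of_nat k) (p - k) / (fact k * fact (p - k))
        = pochhammer (of_nat q) k * pochhammer (- of_nat p) k / (of_nat (fact k) * pochhammer a k) * pochhammer a p / fact p"
      by (simp add: pochhammer_minus_of_nat field_simps)
  qed
  also have "\<dots> = pochhammer (a - of_nat q) p / fact p"
    using Vandermonde_pochhammer[of p a "of_nat q"] assms
    by (simp add: pochhammer_eq_0_iff atLeast0AtMost)
  finally show ?thesis .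
qed

lemma pochhammer_diff_of_nat_minus_pochhammer:
  fixes a :: "'a::field_char_0"
  assumes "pochhammer a p \<noteq> 0"
  shows "(\<Sum>k<p. (-1) ^ Suc k * pochhammer (of_nat q) (Suc k) * pochhammer (a + of_nat (Suc k)) (p - Suc k)
                 / (fact (Suc k) * fact (p - Suc k)))
       = (pochhammer (a - of_nat q) p - pochhammer a p) / fact p"
proof -
  have "pochhammer a p / fact p
        + (\<Sum>k<p. (-1) ^ Suc k * pochhammer (of_nat q) (Suc k) * pochhammer (a + of_nat (Suc k)) (p - Suc k)
                 / (fact (Suc k) * fact (p - Suc k)))
      = pochhammer (a - of_nat q) p / fact p"
    using pochhammer_diff_of_nat_expansion[OF assms, of q]
    unfolding lessThan_Suc_atMost[symmetric] sum.lessThan_Suc_shift by simp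
  then show ?thesis
    by (simp add: diff_divide_distrib eq_diff_eq add.commute)
qed

lemma poch_int_mult_pochhammer_one_minus:
  assumes "a \<notin> \<int>"
  shows "poch_int a (int p - int q) * pochhammer (1 - a) q = (-1) ^ q * pochhammer (a - of_nat q) p"
proof -
  have reflect: "pochhammer (1 - a) q = (-1) ^ q * pochhammer (a - of_nat q) q"
    using pochhammer_minus[of "a - 1" q] by simp
  show ?thesis
  proof (cases "q \<le> p")
    case True
    then have "pochhammer (a - of_nat q) p = pochhammer (a - of_nat q) q * pochhammer a (p - q)"
      by (simp add: pochhammer_product)
    with True show ?thesis
      by (simp add: poch_int_def reflect nat_diff_distrib)
  next
    case False
    then have split: "pochhammer (a - of_nat q) q
        = pochhammer (a - of_nat q) p * pochhammer (a - of_nat q + of_nat p) (q - p)"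
      by (intro pochhammer_product) auto
    have "a - of_nat q + of_nat p \<notin> \<int>"
    proof
      assume "a - of_nat q + of_nat p \<in> \<int>"
      then have "a - of_nat q + of_nat p - of_nat p + of_nat q \<in> \<int>"
        by (intro Ints_add Ints_diff) auto
      with assms show False by simp
    qed
    then have "pochhammer (a - of_nat q + of_nat p) (q - p) \<noteq> 0"
      by (metis Ints_minus Ints_of_nat pochhammer_eq_0_iff)
    moreover have "nat (- (int p - int q)) = q - p" and "a + of_int (int p - int q) = a - of_nat q + of_nat p"
      using False by auto
    ultimately show ?thesis
      using False by (simp add: poch_int_def reflect split field_simps)
  qed
qed

lemma sums_fpsI:
  fixes f :: "nat \<Rightarrow> 'a::ab_group_add fps"
  assumes "\<And>k p. p \<le> k \<Longrightarrow> fps_nth (f k) p = 0"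
    and "\<And>p. fps_nth (\<Sum>k<p. f k) p = fps_nth S p"
  shows "f sums S"
  unfolding sums_def
proof (rule tendsto_fpsI)
  fix p
  have "fps_nth (\<Sum>k<n. f k) p = fps_nth S p" if "p \<le> n" for n
  proof -
    have "fps_nth (\<Sum>k<n. f k) p = (\<Sum>k<p. fps_nth (f k) p)"
      unfolding fps_sum_nth using that assms(1) by (intro sum.mono_neutral_right) auto
    then show ?thesis
      using assms(2)[of p] by (simp add: fps_sum_nth)
  qed
  then show "\<forall>\<^sub>F n in sequentially. fps_nth (\<Sum>k<n. f k) p = fps_nth S p"
    unfolding eventually_sequentially by blast
qed

lemma fps_nth_hyp2F1:
  "fps_nth (hyp2F1 a b c) n = pochhammer a n * pochhammer b n / (pochhammer c n * fact n)"
  by (simp add: hyp2F1_def)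

lemma fps_nth_hyp1F1_compose_uminus_X:
  "fps_nth (hyp1F1 a c oo - fps_X) n = (-1) ^ n * (pochhammer a n / (pochhammer c n * fact n))"
  by (simp add: hyp1F1_def fps_compose_uminus')

lemma fps_nth_fps_in_x_mult_fps_in_y:
  "fps_nth (fps_nth (const2 r * X2 ^ m * Y2 ^ l * fps_in_x F * fps_in_y G) p) q
     = (if m \<le> p \<and> l \<le> q then r * fps_nth F (p - m) * fps_nth G (q - l) else 0)"
proof -
  have regroup: "const2 r * X2 ^ m * Y2 ^ l * fps_in_x F * fps_in_y G
        = fps_X ^ m * (fps_in_x F * fps_const (fps_const r * fps_X ^ l * G))"
    by (simp add: fps_in_y_def mult_ac)
  have "fps_nth (fps_nth (fps_in_x F * fps_const (fps_const r * fps_X ^ l * G)) i) q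
        = fps_nth F i * r * (if l \<le> q then fps_nth G (q - l) else 0)" for i
  proof -
    have row: "fps_nth (fps_in_x F * fps_const (fps_const r * fps_X ^ l * G)) i
        = fps_const (fps_nth F i) * (fps_const r * (fps_X ^ l * G))"
      by (simp add: fps_in_x_def mult.assoc)
    show ?thesis
      unfolding row fps_mult_left_const_nth by (simp add: fps_X_power_mult_nth)
  qed
  then show ?thesis
    unfolding regroup by (auto simp: fps_X_power_mult_nth)
qed

text \<open>The coefficient of \<open>x^(k+1) y^l\<close> in the double sum; the paper's summation index is \<open>k + 1\<close>.\<close>
definition H2_expansion_coeff :: "complex \<Rightarrow> complex \<Rightarrow> complex \<Rightarrow> complex \<Rightarrow> nat \<Rightarrow> nat \<Rightarrow> complex" where
  "H2_expansion_coeff a b c d k l =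
     (-1) ^ (Suc k + l) * fact k / (fact (l - 1) * fact l * fact (Suc k - l))
       * pochhammer b (Suc k) * pochhammer c l / (pochhammer (1 - a) l * pochhammer d (Suc k))"

lemma H2_expansion_coeff_mult_nth:
  assumes "1 \<le> l" "l \<le> Suc k" "Suc k \<le> p" "l \<le> q"
    and "pochhammer d p \<noteq> 0" "pochhammer (1 - a) q \<noteq> 0"
  shows "H2_expansion_coeff a b c d k l
           * fps_nth (hyp2F1 (a + of_nat (Suc k)) (b + of_nat (Suc k)) (d + of_nat (Suc k))) (p - Suc k)
           * fps_nth (hyp1F1 (c + of_nat l) (1 - a + of_nat l) oo - fps_X) (q - l)
       = pochhammer b p * pochhammer c q / (pochhammer d p * pochhammer (1 - a) q) * (-1) ^ q
           * ((-1) ^ Suc k * pochhammer (a + of_nat (Suc k)) (p - Suc k) / fact (p - Suc k))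
           * (fact k / (fact (l - 1) * fact l * fact (Suc k - l) * fact (q - l)))"
proof -
  have pb: "pochhammer b p = pochhammer b (Suc k) * pochhammer (b + of_nat (Suc k)) (p - Suc k)"
   and pd: "pochhammer d p = pochhammer d (Suc k) * pochhammer (d + of_nat (Suc k)) (p - Suc k)"
   and pc: "pochhammer c q = pochhammer c l * pochhammer (c + of_nat l) (q - l)"
   and pa: "pochhammer (1 - a) q = pochhammer (1 - a) l * pochhammer (1 - a + of_nat l) (q - l)"
    using assms(3,4) by (simp_all add: pochhammer_product)
  have "(-1 :: complex) ^ (Suc k + l) * (-1) ^ (q - l) = (-1) ^ q * (-1) ^ Suc k"
    using assms(4) by (simp add: add.commute flip: power_add)
  moreover have "pochhammer d (Suc k) \<noteq> 0" "pochhammer (d + of_nat (Suc k)) (p - Suc k) \<noteq> 0"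
    "pochhammer (1 - a) l \<noteq> 0" "pochhammer (1 - a + of_nat l) (q - l) \<noteq> 0"
    using assms(5,6) pd pa by auto
  ultimately show ?thesis
    unfolding H2_expansion_coeff_def fps_nth_hyp2F1 fps_nth_hyp1F1_compose_uminus_X pb pd pc pa
    by (simp add: field_simps)
qed

lemma H2_expansion_coeff_sum:
  assumes a: "a \<notin> \<int>" and d: "d \<notin> \<int>\<^sub>\<le>\<^sub>0"
  shows "(\<Sum>k<p. \<Sum>l=1..Suc k. if Suc k \<le> p \<and> l \<le> q then H2_expansion_coeff a b c d k l
             * fps_nth (hyp2F1 (a + of_nat (Suc k)) (b + of_nat (Suc k)) (d + of_nat (Suc k))) (p - Suc k)
             * fps_nth (hyp1F1 (c + of_nat l) (1 - a + of_nat l) oo - fps_X) (q - l) else 0)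
       = fps_nth (fps_nth (H2 a b c d) p) q
           - fps_nth (hyp2F1 a b d) p * fps_nth (hyp1F1 c (1 - a) oo - fps_X) q"
proof -
  have "1 - a \<notin> \<int>"
    using a Ints_diff[of 1 "1 - a"] by auto
  then have a_nz: "pochhammer a p \<noteq> 0" "pochhammer (1 - a) q \<noteq> 0"
    using a by (metis Ints_minus Ints_of_nat pochhammer_eq_0_iff)+
  have d_nz: "pochhammer d p \<noteq> 0"
    using d by (auto simp: pochhammer_eq_0_iff)
  define B where "B = pochhammer b p * pochhammer c q / (pochhammer d p * pochhammer (1 - a) q)"
  define P where "P k = (-1) ^ Suc k * pochhammer (a + of_nat (Suc k)) (p - Suc k) / fact (p - Suc k)" for k
  have "(\<Sum>k<p. \<Sum>l=1..Suc k. if Suc k \<le> p \<and> l \<le> q then H2_expansion_coeff a b c d k l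
             * fps_nth (hyp2F1 (a + of_nat (Suc k)) (b + of_nat (Suc k)) (d + of_nat (Suc k))) (p - Suc k)
             * fps_nth (hyp1F1 (c + of_nat l) (1 - a + of_nat l) oo - fps_X) (q - l) else 0)
      = (\<Sum>k<p. B * (-1) ^ q * P k
           * (\<Sum>l=1..Suc k. if l \<le> q then fact k / (fact (l - 1) * fact l * fact (Suc k - l) * fact (q - l)) else 0))"
    unfolding sum_distrib_left B_def P_def
    by (intro sum.cong refl) (use H2_expansion_coeff_mult_nth d_nz a_nz in auto)
  also have "\<dots> = (\<Sum>k<p. B * (-1) ^ q * P k * (pochhammer (of_nat q) (Suc k) / (fact (Suc k) * fact q)))"
    by (simp only: sum_fact_quotients_eq_pochhammer)
  also have "\<dots> = B * (-1) ^ q / fact q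
      * (\<Sum>k<p. (-1) ^ Suc k * pochhammer (of_nat q) (Suc k) * pochhammer (a + of_nat (Suc k)) (p - Suc k)
                  / (fact (Suc k) * fact (p - Suc k)))"
    unfolding sum_distrib_left P_def by (intro sum.cong) (auto simp: field_simps)
  also have "\<dots> = B * (-1) ^ q / fact q * ((pochhammer (a - of_nat q) p - pochhammer a p) / fact p)"
    by (simp only: pochhammer_diff_of_nat_minus_pochhammer[OF a_nz(1)])
  also have "\<dots> = fps_nth (fps_nth (H2 a b c d) p) q
           - fps_nth (hyp2F1 a b d) p * fps_nth (hyp1F1 c (1 - a) oo - fps_X) q"
  proof -
    have "poch_int a (int p - int q) = (-1) ^ q * pochhammer (a - of_nat q) p / pochhammer (1 - a) q"
      using poch_int_mult_pochhammer_one_minus[OF a, of p q] a_nz by (simp add: field_simps)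
    then show ?thesis
      using d_nz a_nz
      by (simp add: H2_def fps_nth_hyp2F1 fps_nth_hyp1F1_compose_uminus_X B_def field_simps)
  qed
  finally show ?thesis .
qed

theorem mainTheorem4:
  fixes a b c d :: complex
  assumes "a \<notin> \<int>" and "d \<notin> \<int>\<^sub>\<le>\<^sub>0"
  shows "(\<lambda>k. \<Sum>l = 1..Suc k.
            const2 ((-1) ^ (Suc k + l) * fact k / (fact (l - 1) * fact l * fact (Suc k - l))
                    * pochhammer b (Suc k) * pochhammer c l
                    / (pochhammer (1 - a) l * pochhammer d (Suc k)))
            * X2 ^ Suc k * Y2 ^ l
            * fps_in_x (hyp2F1 (a + of_nat (Suc k)) (b + of_nat (Suc k)) (d + of_nat (Suc k)))
            * fps_in_y (hyp1F1 (c + of_nat l) (1 - a + of_nat l) oo (- fps_X)))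
         sums (H2 a b c d - fps_in_x (hyp2F1 a b d) * fps_in_y (hyp1F1 c (1 - a) oo (- fps_X)))"
  (is "?T sums ?R")
proof (rule sums_fpsI)
  have T_nth: "fps_nth (fps_nth (?T k) p) q = (\<Sum>l=1..Suc k. if Suc k \<le> p \<and> l \<le> q then
       H2_expansion_coeff a b c d k l
         * fps_nth (hyp2F1 (a + of_nat (Suc k)) (b + of_nat (Suc k)) (d + of_nat (Suc k))) (p - Suc k)
         * fps_nth (hyp1F1 (c + of_nat l) (1 - a + of_nat l) oo - fps_X) (q - l) else 0)" for k p q
    unfolding H2_expansion_coeff_def fps_sum_nth fps_nth_fps_in_x_mult_fps_in_y ..
  show "fps_nth (?T k) p = 0" if "p \<le> k" for k p
    using that by (intro fps_ext) (simp only: T_nth fps_zero_nth, simp)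
  show "fps_nth (\<Sum>k<p. ?T k) p = fps_nth ?R p" for p
  proof (rule fps_ext)
    fix q
    have "fps_nth (fps_nth (\<Sum>k<p. ?T k) p) q = (\<Sum>k<p. fps_nth (fps_nth (?T k) p) q)"
      by (simp only: fps_sum_nth)
    also have "\<dots> = fps_nth (fps_nth (H2 a b c d) p) q
        - fps_nth (hyp2F1 a b d) p * fps_nth (hyp1F1 c (1 - a) oo - fps_X) q"
      unfolding T_nth by (rule H2_expansion_coeff_sum[OF assms])
    also have "\<dots> = fps_nth (fps_nth ?R p) q"
      by (simp add: fps_in_x_def fps_in_y_def)
    finally show "fps_nth (fps_nth (\<Sum>k<p. ?T k) p) q = fps_nth (fps_nth ?R p) q" .
  qed
qed

end
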